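(* Let $m \geq 1$ be an integer and define $F(m,p) = \mathbb{P}_{X\sim B(m,p)}[X \geq mp] = \sum_{j=\lceil mp\rceil}^{m} \binom{m}{j} p^j (1-p)^{m-j}$ for $p \in [0,1]$. Then for every $k \in \{1, \ldots, m\}$, the function $p \mapsto F(m,p)$ is strictly increasing on the interval $\left(\frac{k-1}{m}, \frac{k}{m}\right]$.
   Context: $B(m,p)$ denotes the binomial distribution with $m$ trials and success probability $p$: $\mathbb{P}[X=j]=\binom{m}{j}p^j(1-p)^{m-j}$ for $j=0,\dots,m$; its mean is $mp$. *)

theory Defs
  imports Complex_Main
begin

definition binomF :: "nat \<Rightarrow> real \<Rightarrow> real" where
  "binomF m p = (\<Sum>j = nat \<lceil>real m * p\<rceil>..m. real (m choose j) * p ^ j * (1 - p) ^ (m - j))"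

end

theory Submission
  imports Defs "HOL-Analysis.Weierstrass_Theorems"
begin

text \<open>On the interval \<open>((k-1)/m, k/m]\<close> the lower summation bound \<open>\<lceil>m p\<rceil>\<close> is constantly \<open>k\<close>,
  so there \<open>F(m,\<cdot>)\<close> is the fixed upper tail \<open>\<Sum>j=k..m. B\<^sub>m\<^sub>,\<^sub>j\<close> of Bernstein polynomials.
  Differentiating the Bernstein polynomials makes this sum telescope: its derivative is
  \<open>m B\<^sub>m\<^sub>-\<^sub>1\<^sub>,\<^sub>k\<^sub>-\<^sub>1(p)\<close>, which is positive on \<open>(0,1)\<close>. The mean value theorem concludes.\<close>

lemma has_real_derivative_Bernstein_Suc:
  assumes "i \<le> n"
  shows "(Bernstein (Suc n) (Suc i) has_real_derivative
           real (Suc n) * (Bernstein n i x - Bernstein n (Suc i) x)) (at x)"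
proof -
  let ?c = "real (Suc n choose Suc i)"
  have "(Bernstein (Suc n) (Suc i) has_real_derivative
      ?c * (real (Suc i) * x ^ i * (1 - x) ^ (n - i)
        - x ^ Suc i * (real (n - i) * (1 - x) ^ (n - Suc i)))) (at x)"
    unfolding Bernstein_def
    by (auto intro!: derivative_eq_intros simp: algebra_simps) (cases i; simp add: algebra_simps)
  also have "?c * (real (Suc i) * x ^ i * (1 - x) ^ (n - i)
        - x ^ Suc i * (real (n - i) * (1 - x) ^ (n - Suc i)))
      = (?c * real (Suc i)) * x ^ i * (1 - x) ^ (n - i)
        - (?c * real (n - i)) * x ^ Suc i * (1 - x) ^ (n - Suc i)"
    by (simp add: algebra_simps)
  also have "?c * real (Suc i) = real (Suc n) * real (n choose i)"
    by (metis Suc_times_binomial_eq of_nat_mult)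
  also have "?c * real (n - i) = real (Suc n) * real (n choose Suc i)"
    by (metis binomial_absorb_comp diff_Suc_1 diff_Suc_Suc mult.commute of_nat_mult)
  finally show ?thesis
    unfolding Bernstein_def by (simp add: algebra_simps)
qed

definition Bernstein_tail :: "nat \<Rightarrow> nat \<Rightarrow> real \<Rightarrow> real" where
  "Bernstein_tail n k x = (\<Sum>j = k..n. Bernstein n j x)"

lemma has_real_derivative_Bernstein_tail_Suc:
  assumes "i \<le> n"
  shows "(Bernstein_tail (Suc n) (Suc i) has_real_derivative real (Suc n) * Bernstein n i x) (at x)"
proof -
  have "((\<lambda>x. \<Sum>j = Suc i..Suc n. Bernstein (Suc n) j x) has_real_derivative
      (\<Sum>j = Suc i..Suc n. real (Suc n) * (Bernstein n (j - 1) x - Bernstein n j x))) (at x)"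
  proof (rule DERIV_sum)
    fix j assume "j \<in> {Suc i..Suc n}"
    then obtain l where "j = Suc l" "l \<le> n" by (cases j) auto
    then show "((\<lambda>x. Bernstein (Suc n) j x) has_real_derivative
        real (Suc n) * (Bernstein n (j - 1) x - Bernstein n j x)) (at x)"
      using has_real_derivative_Bernstein_Suc[of l n x] by simp
  qed
  moreover have "(\<Sum>j = Suc i..Suc n. Bernstein n (j - 1) x - Bernstein n j x)
      = Bernstein n i x"
  proof -
    have "Bernstein n (Suc n) x = 0" by (simp add: Bernstein_def)
    then show ?thesis
      using sum_telescope''[of i "Suc n" "\<lambda>j. - Bernstein n j x"] assms by simp
  qed
  ultimately show ?thesis
    unfolding Bernstein_tail_def by (simp add: sum_distrib_left[symmetric])
qed

lemma Bernstein_tail_strict_mono_on: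
  assumes "1 \<le> k" and "k \<le> n"
  shows "strict_mono_on {0..1} (Bernstein_tail n k)"
proof (rule strict_mono_onI)
  fix p q :: real assume p: "p \<in> {0..1}" and q: "q \<in> {0..1}" and "p < q"
  obtain n' i where n': "n = Suc n'" and i: "k = Suc i" and "i \<le> n'"
    using assms by (cases n; cases k) auto
  obtain z where z: "p < z" "z < q"
      and diff: "Bernstein_tail n k q - Bernstein_tail n k p = (q - p) * (real n * Bernstein n' i z)"
    using MVT2[OF \<open>p < q\<close>, of "Bernstein_tail n k" "\<lambda>x. real n * Bernstein n' i x"]
      has_real_derivative_Bernstein_tail_Suc[OF \<open>i \<le> n'\<close>] n' i by auto
  have "0 < Bernstein n' i z"
    using z p q \<open>i \<le> n'\<close> by (intro Bernstein_pos) auto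
  then have "0 < (q - p) * (real n * Bernstein n' i z)"
    using \<open>p < q\<close> n' by simp
  then show "Bernstein_tail n k p < Bernstein_tail n k q"
    using diff by linarith
qed

lemma ceiling_mult_eq_on_interval:
  assumes "0 < m" and "p \<in> {(real k - 1) / real m <.. real k / real m}"
  shows "\<lceil>real m * p\<rceil> = int k"
proof -
  have "real k - 1 < real m * p" "real m * p \<le> real k"
    using assms by (auto simp: field_simps)
  then show ?thesis by (simp add: ceiling_eq_iff)
qed

lemma interval_subset_unit:
  assumes "1 \<le> k" and "k \<le> m"
  shows "{(real k - 1) / real m <.. real k / real m} \<subseteq> {0..1}"
proof
  fix p assume "p \<in> {(real k - 1) / real m <.. real k / real m}"
  moreover have "0 < real m" "1 \<le> real k" "real k \<le> real m"
    using assms by simp_all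
  ultimately have "real k - 1 < real m * p" "real m * p \<le> real k"
    by (auto simp: field_simps)
  with \<open>1 \<le> real k\<close> \<open>real k \<le> real m\<close> have "0 \<le> real m * p" "real m * p \<le> real m * 1"
    by linarith+
  then show "p \<in> {0..1}"
    using assms by (simp add: zero_le_mult_iff mult_le_cancel_left_pos)
qed

theorem mainTheorem3:
  fixes m k :: nat
  assumes "m \<ge> 1" and "1 \<le> k" and "k \<le> m"
  shows "strict_mono_on {(real k - 1) / real m <.. real k / real m} (\<lambda>p. binomF m p)"
proof -
  let ?I = "{(real k - 1) / real m <.. real k / real m}"
  have eq: "binomF m p = Bernstein_tail m k p" if "p \<in> ?I" for p
    using ceiling_mult_eq_on_interval[OF _ that] assms
    by (simp add: binomF_def Bernstein_tail_def Bernstein_def)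
  show ?thesis
    using monotone_on_subset[OF Bernstein_tail_strict_mono_on interval_subset_unit] assms
    by (simp add: strict_mono_on_def eq)
qed

end
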